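(* Let $t\in\mathbb{N}$ be a constant, let $n=2^m$, and let $\beta=\log_2\sqrt[t+1]{2^{t+1}-1}$. Then the running time of $\mathrm{cover}(\mathbf{v},r)$ (described in the context) on inputs $\mathbf{v}\in\mathbb{F}_2^{t\times n}$ is: $O(n^{t+1})$ when $r$ is constant; $O(n^{(t+1)(1-\alpha\beta)})$ when $r=\alpha m$ with $0<\alpha<\frac{t}{(t+1)\beta}$ constant; and $O(n\log n)$ when $r=m-s$ with $s$ constant, or when $r=\alpha m$ with $\frac{t}{(t+1)\beta}\leq \alpha<1$ constant.
   Context: For a $t\times n$ binary matrix $\mathbf{v}$ with rows $\overline{v}_1,\dots,\overline{v}_t$, $\mathrm{wt}^{(t)}(\mathbf{v})=\left|\bigcup_{i} \mathrm{supp}(\overline{v}_i)\right|$ and $d^{(t)}(\mathbf{u},\mathbf{v})=\mathrm{wt}^{(t)}(\mathbf{u}-\mathbf{v})$. For a linear code $C\subseteq\mathbb{F}_2^n$, $C^t$ is the set of $t\times n$ matrices all of whose rows lie in $C$. Reed–Muller codes: $\mathrm{RM}(0,m)=\{\overline{0},\overline{1}\}\subseteq\mathbb{F}_2^{2^m}$, $\mathrm{RM}(m,m)=\mathbb{F}_2^{2^m}$, and for $1\leq r\leq m-1$, $\mathrm{RM}(r,m)=\{(\overline{u},\overline{u}+\overline{v}) : \overline{u}\in \mathrm{RM}(r,m-1),\ \overline{v}\in\mathrm{RM}(r-1,m-1)\}$. The algorithm: $\mathrm{recursive}(\mathbf{v},r)$, for $\mathbf{v}\in\mathbb{F}_2^{t\times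 2^m}$ and $1\le r\le m$: if $r=m$, return $\mathbf{v}$; if $r=1$, return a matrix $\mathbf{c}\in\mathrm{RM}(1,m)^t$ minimizing $d^{(t)}(\mathbf{v},\mathbf{c})$, found by exhaustively computing $d^{(t)}(\mathbf{v},\mathbf{c})$ for every $\mathbf{c}\in\mathrm{RM}(1,m)^t$; otherwise write $\mathbf{v}=(\mathbf{v}_1,\mathbf{v}_2)$ with $\mathbf{v}_1,\mathbf{v}_2\in\mathbb{F}_2^{t\times 2^{m-1}}$ (first and second halves of the columns), compute $\mathbf{c}_1=\mathrm{recursive}(\mathbf{v}_1,r)$ and $\mathbf{c}_2=\mathrm{recursive}(\mathbf{v}_2-\mathbf{c}_1,r-1)$, and return $(\mathbf{c}_1,\mathbf{c}_1+\mathbf{c}_2)$. $\mathrm{subadditive}(\mathbf{v},r)$: apply $\mathrm{recursive}$ separately to each row of $\mathbf{v}$ and stack the results. $\mathrm{cover}(\mathbf{v},r)$: compute $\mathrm{recursive}(\mathbf{v},r)$ and $\mathrm{subadditive}(\mathbf{v},r)$ and return whichever is closer to $\mathbf{v}$ in $d^{(t)}$. *)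

theory Defs
  imports Complex_Main "HOL-Library.Landau_Symbols"
begin

text \<open>Binary vectors of length 2^m are bool lists; addition over F_2 is pointwise xor.\<close>

fun RM :: "nat \<Rightarrow> nat \<Rightarrow> bool list set" where
  "RM 0 m = {replicate (2^m) False, replicate (2^m) True}"
| "RM (Suc r) m =
     (if m \<le> Suc r then {xs. length xs = 2^m}
      else {u @ map2 (\<noteq>) u v | u v. u \<in> RM (Suc r) (m - 1) \<and> v \<in> RM r (m - 1)})"

text \<open>Running time (number of elementary bit operations) of recursive(v, r) on a
  t x 2^m input matrix v, following the algorithm step by step:
  \<^item> r = m: return v (reading the t*2^m input entries);
  \<^item> r = 1: exhaustive search over all |RM(1,m)|^t matrices of RM(1,m)^t, computing
    d^(t)(v,c) for each candidate at cost t*2^m;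
  \<^item> otherwise: splitting v and the subtraction / addition of t x 2^(m-1) matrices
    (cost t*2^m) plus the two recursive calls.\<close>

function rec_cost :: "nat \<Rightarrow> nat \<Rightarrow> nat \<Rightarrow> nat" where
  "rec_cost t m r =
     (if m \<le> r then t * 2^m
      else if r \<le> 1 then card (RM 1 m) ^ t * (t * 2^m)
      else t * 2^m + rec_cost t (m - 1) r + rec_cost t (m - 1) (r - 1))"
  by auto
termination by (relation "measure (\<lambda>(t, m, r). m)") auto

text \<open>Running time of subadditive(v, r): recursive applied to each of the t rows
  (each a 1 x 2^m matrix), plus stacking the results.\<close>

definition subadd_cost :: "nat \<Rightarrow> nat \<Rightarrow> nat \<Rightarrow> nat" where
  "subadd_cost t m r = t * rec_cost 1 m r + t * 2^m"

text \<open>Running time of cover(v, r): both algorithms, plus computing the two distances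
  d^(t) to v (cost t*2^m each) and comparing them.\<close>

definition cover_cost :: "nat \<Rightarrow> nat \<Rightarrow> nat \<Rightarrow> nat" where
  "cover_cost t m r = rec_cost t m r + subadd_cost t m r + 2 * (t * 2^m) + 1"

end

theory Submission
  imports Defs "HOL-Real_Asymp.Real_Asymp"
begin

text \<open>Write \<open>N = 2^(t+1)\<close> and \<open>q = N - 1\<close>. An exhaustive search over \<open>RM(1,m)^t\<close> costs at most
  \<open>t 2^t N^m\<close>, and the exhaustive searches at the leaves of \<open>recursive\<close> satisfy
  \<open>T(m,r) = T(m-1,r) + T(m-1,r-1)\<close>, which is solved by \<open>N^m / q^r\<close> because \<open>1 + q = N\<close>; the
  splitting overhead adds \<open>t (m+1) 2^m\<close>. Since \<open>subadditive\<close> is the case \<open>t = 1\<close>, the cost of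
  \<open>cover\<close> is \<open>O(N^m / q^r + 4^m / 3^r + m 2^m)\<close>. The four regimes follow by comparing exponents:
  \<open>N^m / q^r = 2^((t+1) m - r log q)\<close> with \<open>log q = (t+1) \<beta>\<close>, and \<open>log q \<le> t log 3\<close> ensures that the
  \<open>t = 1\<close> term never dominates.\<close>

declare RM.simps [simp del] rec_cost.simps [simp del]

lemma finite_RM: "finite (RM r m)"
proof (induction r m rule: RM.induct)
  case (1 m)
  then show ?case by (simp add: RM.simps)
next
  case (2 r m)
  show ?case
  proof (cases "m \<le> Suc r")
    case True
    then have "RM (Suc r) m = {xs. set xs \<subseteq> UNIV \<and> length xs = 2^m}" by (simp add: RM.simps)
    then show ?thesis using finite_lists_length_eq[of "UNIV :: bool set" "2^m"] by simp
  next
    case False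
    then have "RM (Suc r) m = (\<lambda>(u, v). u @ map2 (\<noteq>) u v) ` (RM (Suc r) (m - 1) \<times> RM r (m - 1))"
      unfolding RM.simps(2)[of r m] by auto
    then show ?thesis using 2 False by simp
  qed
qed

lemma card_RM_0_le: "card (RM 0 m) \<le> 2"
  by (simp add: card_insert_le_m1 RM.simps)

lemma card_RM_1_le: "card (RM 1 m) \<le> 2 ^ (m + 1)"
proof (induction m)
  case 0
  have "RM 1 0 = {xs. set xs \<subseteq> UNIV \<and> length xs = 1}" by (simp add: RM.simps)
  then show ?case using card_lists_length_eq[of "UNIV :: bool set" 1] by simp
next
  case (Suc m)
  show ?case
  proof (cases "m = 0")
    case True
    have "RM 1 1 = {xs. set xs \<subseteq> UNIV \<and> length xs = 2}" by (simp add: RM.simps)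
    then show ?thesis using True card_lists_length_eq[of "UNIV :: bool set" 2] by simp
  next
    case False
    have "RM 1 (Suc m) = (\<lambda>(u, v). u @ map2 (\<noteq>) u v) ` (RM 1 m \<times> RM 0 m)"
      unfolding RM.simps(2)[of 0 "Suc m"] One_nat_def using False by auto
    then have "card (RM 1 (Suc m)) \<le> card (RM 1 m \<times> RM 0 m)"
      by (simp only: card_image_le finite_cartesian_product finite_RM)
    also have "\<dots> = card (RM 1 m) * card (RM 0 m)" by (simp add: card_cartesian_product)
    also have "\<dots> \<le> 2 ^ (m + 1) * 2" using Suc.IH card_RM_0_le by (intro mult_mono) auto
    finally show ?thesis by simp
  qed
qed

subsection \<open>An explicit bound on the running time\<close>

definition search_weight :: "nat \<Rightarrow> nat \<Rightarrow> nat \<Rightarrow> real" where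
  "search_weight t m r = (2 ^ (t + 1)) ^ m / (2 ^ (t + 1) - 1) ^ r"

lemma one_le_two_power_Suc_minus_one: "(1::real) \<le> 2 ^ (t + 1) - 1"
proof -
  have "(2::real) ^ 1 \<le> 2 ^ (t + 1)" by (rule power_increasing) auto
  then show ?thesis by simp
qed

lemma search_weight_nonneg: "0 \<le> search_weight t m r"
  unfolding search_weight_def using one_le_two_power_Suc_minus_one[of t]
  by (intro divide_nonneg_nonneg zero_le_power) linarith+

lemma search_weight_le: "search_weight t m r \<le> (2 ^ (t + 1)) ^ m"
  unfolding search_weight_def by (simp add: divide_le_eq one_le_power)

lemma search_weight_Suc:
  "search_weight t m (Suc r) + search_weight t m r = search_weight t (Suc m) (Suc r)"
proof -
  define q :: real where "q = 2 ^ (t + 1) - 1"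
  have "q > 0" unfolding q_def using one_le_two_power_Suc_minus_one[of t] by linarith
  then have "(q + 1) ^ m / q ^ Suc r + (q + 1) ^ m / q ^ r = (q + 1) ^ Suc m / q ^ Suc r"
    by (simp add: field_simps)
  then show ?thesis unfolding search_weight_def q_def by simp
qed

lemma rec_cost_le:
  "real (rec_cost t m r)
     \<le> t * 2 ^ t * (2 ^ (t + 1) - 1) * search_weight t m r + t * (real m + 1) * 2 ^ m"
proof (induction t m r rule: rec_cost.induct)
  case (1 t m r)
  define c :: real where "c = real t * 2 ^ t * (2 ^ (t + 1) - 1)"
  have c_nonneg: "0 \<le> c" unfolding c_def
    by (intro mult_nonneg_nonneg order_trans[OF zero_le_one one_le_two_power_Suc_minus_one]) simp_all
  consider "m \<le> r" | "r \<le> 1" "\<not> m \<le> r" | "1 < r" "r < m" by linarith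
  then have "real (rec_cost t m r) \<le> c * search_weight t m r + t * (real m + 1) * 2 ^ m"
  proof cases
    case 1
    then have "real (rec_cost t m r) = t * 2 ^ m" by (simp add: rec_cost.simps)
    also have "\<dots> \<le> t * (real m + 1) * 2 ^ m" by (simp add: algebra_simps)
    finally show ?thesis
      using c_nonneg search_weight_nonneg[of t m r] by (meson add_increasing mult_nonneg_nonneg)
  next
    case 2
    have "real (card (RM 1 m)) \<le> 2 ^ (m + 1)" using of_nat_mono[OF card_RM_1_le[of m]] by simp
    have "real (rec_cost t m r) = real (card (RM 1 m)) ^ t * (real t * 2 ^ m)"
      using 2 by (simp add: rec_cost.simps)
    also have "\<dots> \<le> (2 ^ (m + 1)) ^ t * (real t * 2 ^ m)"
      using \<open>real (card (RM 1 m)) \<le> 2 ^ (m + 1)\<close> by (intro mult_right_mono power_mono) auto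
    also have "\<dots> = real t * 2 ^ t * (2 ^ (t + 1)) ^ m"
      by (simp add: power_add power_mult[symmetric] power_mult_distrib algebra_simps)
    also have "\<dots> \<le> c * search_weight t m r"
    proof -
      define q :: real where "q = 2 ^ (t + 1) - 1"
      have "1 \<le> q" unfolding q_def by (rule one_le_two_power_Suc_minus_one)
      then have "0 < q ^ r" "q ^ r \<le> q" using \<open>r \<le> 1\<close> by (auto simp: le_Suc_eq)
      then have "1 \<le> q / q ^ r" by simp
      then have "real t * 2 ^ t * (2 ^ (t + 1)) ^ m * 1 \<le> real t * 2 ^ t * (2 ^ (t + 1)) ^ m * (q / q ^ r)"
        by (intro mult_left_mono) auto
      then show ?thesis unfolding c_def search_weight_def q_def[symmetric] by (simp add: field_simps)
    qed
    finally show ?thesis by (simp add: add_increasing2)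
  next
    case 3
    then obtain m' r' where m: "m = Suc m'" and r: "r = Suc r'"
      by (metis Suc_pred' less_trans not_less_zero not_gr_zero)
    have "real (rec_cost t m r)
        = t * 2 ^ m + real (rec_cost t m' (Suc r')) + real (rec_cost t m' r')"
      using 3 by (subst rec_cost.simps) (simp add: m r)
    also have "\<dots> \<le> t * 2 ^ m
        + (c * search_weight t m' (Suc r') + t * (real m' + 1) * 2 ^ m')
        + (c * search_weight t m' r' + t * (real m' + 1) * 2 ^ m')"
      using "1.IH" 3 m r unfolding c_def by (intro add_mono) auto
    also have "\<dots> = c * search_weight t m r + t * (real m + 1) * 2 ^ m"
      unfolding m r search_weight_Suc[symmetric] by (simp add: algebra_simps)
    finally show ?thesis .
  qed
  then show ?case unfolding c_def .
qed

lemma cover_cost_le: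
  "real (cover_cost t m r)
     \<le> (t * 2 ^ t * (2 ^ (t + 1) - 1) + 11 * t + 1)
        * (search_weight t m r + search_weight 1 m r + (real m + 1) * 2 ^ m)"
proof -
  define c :: real where "c = real t * 2 ^ t * (2 ^ (t + 1) - 1)"
  have c_nonneg: "0 \<le> c" unfolding c_def
    by (intro mult_nonneg_nonneg order_trans[OF zero_le_one one_le_two_power_Suc_minus_one]) simp_all
  define P :: real where "P = (real m + 1) * 2 ^ m"
  have "(2::real) ^ m \<le> P" unfolding P_def by simp
  moreover have "(1::real) \<le> 2 ^ m" by simp
  ultimately have "1 \<le> P" by linarith
  have "real (cover_cost t m r)
      = real (rec_cost t m r) + t * real (rec_cost 1 m r) + 3 * t * 2 ^ m + 1"
    by (simp add: cover_cost_def subadd_cost_def)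
  also have "\<dots> \<le> (c * search_weight t m r + t * P) + t * (6 * search_weight 1 m r + P) + 3 * t * P + P"
  proof (intro add_mono mult_left_mono)
    show "real (rec_cost t m r) \<le> c * search_weight t m r + t * P"
      using rec_cost_le[of t m r] unfolding c_def P_def by (simp add: mult.assoc)
    show "real (rec_cost 1 m r) \<le> 6 * search_weight 1 m r + P"
      using rec_cost_le[of 1 m r] unfolding P_def by simp
  qed (use \<open>2 ^ m \<le> P\<close> \<open>1 \<le> P\<close> in \<open>auto intro: mult_left_mono\<close>)
  also have "\<dots> = c * search_weight t m r + (6 * t) * search_weight 1 m r + (5 * t + 1) * P"
    by (simp add: algebra_simps)
  also have "\<dots> \<le> (c + 11 * t + 1) * search_weight t m r + (c + 11 * t + 1) * search_weight 1 m r
      + (c + 11 * t + 1) * P"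
    using search_weight_nonneg[of t m r] search_weight_nonneg[of 1 m r] \<open>1 \<le> P\<close> c_nonneg
    by (intro add_mono mult_right_mono) auto
  finally show ?thesis unfolding c_def P_def by (simp add: algebra_simps)
qed

lemma cover_cost_bigoI:
  assumes "(\<lambda>m. search_weight t m (r m)) \<in> O(g)"
    and "(\<lambda>m. search_weight 1 m (r m)) \<in> O(g)"
    and "(\<lambda>m. (real m + 1) * 2 ^ m) \<in> O(g)"
  shows "(\<lambda>m. real (cover_cost t m (r m))) \<in> O(g)"
proof -
  define c :: real where "c = real t * 2 ^ t * (2 ^ (t + 1) - 1) + 11 * t + 1"
  have "(\<lambda>m. real (cover_cost t m (r m)))
      \<in> O(\<lambda>m. search_weight t m (r m) + search_weight 1 m (r m) + (real m + 1) * 2 ^ m)"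
  proof (intro bigoI always_eventually allI)
    fix m
    show "norm (real (cover_cost t m (r m)))
        \<le> c * norm (search_weight t m (r m) + search_weight 1 m (r m) + (real m + 1) * 2 ^ m)"
      using cover_cost_le[of t m "r m"] search_weight_nonneg[of t m "r m"]
        search_weight_nonneg[of 1 m "r m"] unfolding c_def by (simp add: add.commute)
  qed
  also have "(\<lambda>m. search_weight t m (r m) + search_weight 1 m (r m) + (real m + 1) * 2 ^ m) \<in> O(g)"
    using assms by (intro sum_in_bigo)
  finally show ?thesis .
qed

subsection \<open>Growth in the four regimes\<close>

definition search_exponent :: "nat \<Rightarrow> real \<Rightarrow> real" where
  "search_exponent t \<alpha> = t + 1 - \<alpha> * log 2 (2 ^ (t + 1) - 1)"

lemma search_weight_le_powr:
  fixes \<alpha> :: real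
  assumes "\<alpha> * m - 1 \<le> r"
  shows "search_weight t m r \<le> (2 ^ (t + 1) - 1) * 2 powr (search_exponent t \<alpha> * m)"
proof -
  define q :: real where "q = 2 ^ (t + 1) - 1"
  define L where "L = log 2 q"
  have "1 \<le> q" unfolding q_def by (rule one_le_two_power_Suc_minus_one)
  then have "0 \<le> L" and q_eq: "q = 2 powr L" unfolding L_def by simp_all
  have "(2 ^ (t + 1)) ^ m = (2::real) powr real ((t + 1) * m)"
    by (simp only: powr_realpow zero_less_numeral power_mult)
  moreover have "q ^ r = 2 powr (L * r)"
    by (simp add: q_eq powr_powr[symmetric] powr_realpow)
  ultimately have "search_weight t m r = 2 powr (real ((t + 1) * m) - L * r)"
    unfolding search_weight_def q_def[symmetric] by (simp add: powr_diff)
  also have "\<dots> \<le> 2 powr (real ((t + 1) * m) - L * (\<alpha> * m - 1))"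
  proof -
    have "L * (\<alpha> * m - 1) \<le> L * r" using assms \<open>0 \<le> L\<close> by (rule mult_left_mono)
    then show ?thesis by simp
  qed
  also have "\<dots> = q * 2 powr (search_exponent t \<alpha> * m)"
    unfolding search_exponent_def q_def[symmetric] L_def[symmetric] q_eq
    by (simp add: powr_add[symmetric] algebra_simps)
  finally show ?thesis unfolding q_def .
qed

lemma search_weight_bigo_linear_rank:
  assumes "search_exponent t \<alpha> \<le> e"
  shows "(\<lambda>m. search_weight t m (nat \<lfloor>\<alpha> * m\<rfloor>)) \<in> O(\<lambda>m. 2 powr (e * m))"
proof (rule bigoI[where c = "2 ^ (t + 1) - 1"], intro always_eventually allI)
  fix m :: nat
  have "\<alpha> * m - 1 \<le> real (nat \<lfloor>\<alpha> * m\<rfloor>)"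
    by (cases "0 \<le> \<lfloor>\<alpha> * m\<rfloor>") (simp_all add: of_nat_nat)
  then have "search_weight t m (nat \<lfloor>\<alpha> * m\<rfloor>) \<le> (2 ^ (t + 1) - 1) * 2 powr (search_exponent t \<alpha> * m)"
    by (rule search_weight_le_powr)
  also have "\<dots> \<le> (2 ^ (t + 1) - 1) * 2 powr (e * m)"
    using assms by (intro mult_left_mono powr_mono mult_right_mono
        order_trans[OF zero_le_one one_le_two_power_Suc_minus_one]) auto
  finally show "norm (search_weight t m (nat \<lfloor>\<alpha> * m\<rfloor>)) \<le> (2 ^ (t + 1) - 1) * norm (2 powr (e * m))"
    using search_weight_nonneg by simp
qed

lemma two_power_Suc_minus_one_le_three_power: "(2::real) ^ (t + 1) - 1 \<le> 3 ^ t"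
proof (induction t)
  case (Suc t)
  have "(2::real) ^ (Suc t + 1) - 1 = 2 * (2 ^ (t + 1) - 1) + 1" by simp
  also have "\<dots> \<le> 2 * 3 ^ t + 1" using Suc.IH by simp
  also have "\<dots> \<le> 3 ^ Suc t" by simp
  finally show ?case .
qed simp

lemma search_exponent_1_le:
  assumes "1 \<le> t"
  shows "search_exponent 1 \<alpha> \<le> max 1 (search_exponent t \<alpha>)"
proof -
  define L where "L = log 2 (2 ^ (t + 1) - 1 :: real)"
  have "(2::real) ^ 2 \<le> 2 ^ (t + 1)" using assms by (intro power_increasing) auto
  then have "log 2 3 \<le> L" unfolding L_def by simp
  have "L \<le> log 2 (3 ^ t)"
    unfolding L_def using two_power_Suc_minus_one_le_three_power \<open>2 ^ 2 \<le> 2 ^ (t + 1)\<close> by simp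
  then have "L \<le> t * log 2 3" by (simp add: log_nat_power)
  show ?thesis
  proof (cases "\<alpha> \<le> 0")
    case True
    then have "\<alpha> * (L - log 2 3) \<le> 0" using \<open>log 2 3 \<le> L\<close> by (simp add: mult_nonpos_nonneg)
    then show ?thesis using assms unfolding search_exponent_def L_def[symmetric] by (simp add: algebra_simps)
  next
    case False
    then have L_le: "\<alpha> * L \<le> t * (\<alpha> * log 2 3)"
      using \<open>L \<le> t * log 2 3\<close> by (simp add: mult_left_mono mult.left_commute)
    show ?thesis
    proof (cases "\<alpha> * L \<le> t")
      case True
      have "t * (\<alpha> * L - \<alpha> * log 2 3) \<le> (real t - 1) * (\<alpha> * L)"
        using L_le by (simp add: algebra_simps)
      also have "\<dots> \<le> (real t - 1) * t" using True assms by (intro mult_left_mono) auto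
      finally have "\<alpha> * L - \<alpha> * log 2 3 \<le> real t - 1"
        using assms by (simp add: mult.commute[of "real t - 1"] mult_le_cancel_left_pos)
      then show ?thesis unfolding search_exponent_def L_def by simp
    next
      case False
      then have "t * 1 < t * (\<alpha> * log 2 3)" using L_le by simp
      then have "1 \<le> \<alpha> * log 2 3" using assms by (simp add: mult_less_cancel_left_pos)
      then show ?thesis unfolding search_exponent_def by simp
    qed
  qed
qed

lemma search_exponent_log_root:
  fixes t :: nat and \<alpha> \<beta> :: real
  assumes "1 \<le> t" and "\<beta> = log 2 (root (t + 1) (2 ^ (t + 1) - 1))"
  shows "(t + 1) * (1 - \<alpha> * \<beta>) = search_exponent t \<alpha>"
    and "\<alpha> < t / ((t + 1) * \<beta>) \<longleftrightarrow> 1 < search_exponent t \<alpha>"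
proof -
  define L where "L = log 2 (2 ^ (t + 1) - 1 :: real)"
  have "(2::real) ^ 2 \<le> 2 ^ (t + 1)" using assms(1) by (intro power_increasing) auto
  then have "0 < L" unfolding L_def by simp
  have "\<beta> = L / (t + 1)" unfolding assms(2) L_def using \<open>2 ^ 2 \<le> 2 ^ (t + 1)\<close> by (simp add: log_root)
  then show "(t + 1) * (1 - \<alpha> * \<beta>) = search_exponent t \<alpha>"
    and "\<alpha> < t / ((t + 1) * \<beta>) \<longleftrightarrow> 1 < search_exponent t \<alpha>"
    using \<open>0 < L\<close> unfolding search_exponent_def L_def[symmetric] by (simp_all add: field_simps)
qed

lemma search_weight_corank_bigo: "(\<lambda>m. search_weight t m (m - s)) \<in> O(\<lambda>m. 2 ^ m)"
proof (rule bigoI[where c = "(2 ^ (t + 1) - 1) ^ s"])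
  define q :: real where "q = 2 ^ (t + 1) - 1"
  have "1 \<le> q" unfolding q_def by (rule one_le_two_power_Suc_minus_one)
  show "\<forall>\<^sub>F m in at_top. norm (search_weight t m (m - s)) \<le> (2 ^ (t + 1) - 1) ^ s * norm ((2::real) ^ m)"
    using eventually_ge_at_top[of s]
  proof eventually_elim
    case (elim m)
    have "(2 ^ (t + 1)) ^ m \<le> (2 * q) ^ m"
      using \<open>1 \<le> q\<close> by (intro power_mono) (auto simp: q_def)
    also have "\<dots> = q ^ s * 2 ^ m * q ^ (m - s)"
      using elim by (simp add: power_mult_distrib power_add[symmetric])
    finally show ?case
      using \<open>1 \<le> q\<close> search_weight_nonneg[of t m "m - s"]
      unfolding search_weight_def q_def[symmetric] by (simp add: divide_le_eq)
  qed
qed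

lemma cover_cost_bigo_power:
  assumes "1 \<le> t"
  shows "(\<lambda>m. real (cover_cost t m (r m))) \<in> O(\<lambda>m. ((2::real) ^ m) ^ (t + 1))"
proof (rule cover_cost_bigoI)
  have power_le: "((2::real) ^ m) ^ 2 \<le> ((2::real) ^ m) ^ (t + 1)" for m
    using assms by (intro power_increasing) auto
  have search_weight_le': "search_weight k m r' \<le> ((2::real) ^ m) ^ (k + 1)" for k m r'
    using search_weight_le[of k m r'] by (simp add: power_mult[symmetric] mult.commute)
  have search_weight_1_le: "search_weight 1 m r' \<le> ((2::real) ^ m) ^ (t + 1)" for m r'
    using order_trans[OF search_weight_le'[of 1, unfolded one_add_one] power_le] .
  show "(\<lambda>m. search_weight t m (r m)) \<in> O(\<lambda>m. ((2::real) ^ m) ^ (t + 1))"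
    using search_weight_le' search_weight_nonneg
    by (intro landau_o.big_mono always_eventually allI) simp
  show "(\<lambda>m. search_weight 1 m (r m)) \<in> O(\<lambda>m. ((2::real) ^ m) ^ (t + 1))"
    using search_weight_1_le search_weight_nonneg
    by (intro landau_o.big_mono always_eventually allI) simp
  have "(\<lambda>m. (real m + 1) * 2 ^ m) \<in> O(\<lambda>m. ((2::real) ^ m) ^ 2)" by real_asymp
  also have "(\<lambda>m. ((2::real) ^ m) ^ 2) \<in> O(\<lambda>m. ((2::real) ^ m) ^ (t + 1))"
    using power_le by (intro landau_o.big_mono always_eventually allI) simp
  finally show "(\<lambda>m. (real m + 1) * 2 ^ m) \<in> O(\<lambda>m. ((2::real) ^ m) ^ (t + 1))" .
qed

lemma cover_cost_bigo_linear_rank_small: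
  assumes "1 \<le> t" "1 < search_exponent t \<alpha>"
  shows "(\<lambda>m. real (cover_cost t m (nat \<lfloor>\<alpha> * m\<rfloor>)))
           \<in> O(\<lambda>m. ((2::real) ^ m) powr search_exponent t \<alpha>)"
proof -
  have "((2::real) ^ m) powr e = 2 powr (e * m)" for m e
    by (simp add: powr_realpow[symmetric] powr_powr mult.commute)
  moreover have "(\<lambda>m. real (cover_cost t m (nat \<lfloor>\<alpha> * m\<rfloor>)))
      \<in> O(\<lambda>m. 2 powr (search_exponent t \<alpha> * m))"
  proof (rule cover_cost_bigoI)
    show "(\<lambda>m. search_weight t m (nat \<lfloor>\<alpha> * m\<rfloor>)) \<in> O(\<lambda>m. 2 powr (search_exponent t \<alpha> * m))"
      by (rule search_weight_bigo_linear_rank) simp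
    show "(\<lambda>m. search_weight 1 m (nat \<lfloor>\<alpha> * m\<rfloor>)) \<in> O(\<lambda>m. 2 powr (search_exponent t \<alpha> * m))"
      using search_exponent_1_le[OF assms(1), of \<alpha>] assms(2) by (intro search_weight_bigo_linear_rank) simp
    have linear_bigo: "(\<lambda>m. (real m + 1) * 2 ^ m) \<in> O(\<lambda>m. 2 powr (e * m))" if "1 < e" for e :: real
      using that by real_asymp
    from linear_bigo[OF assms(2)]
    show "(\<lambda>m. (real m + 1) * 2 ^ m) \<in> O(\<lambda>m. 2 powr (search_exponent t \<alpha> * m))" .
  qed
  ultimately show ?thesis by simp
qed

lemma cover_cost_bigo_linear_rank_large:
  assumes "1 \<le> t" "search_exponent t \<alpha> \<le> 1"
  shows "(\<lambda>m. real (cover_cost t m (nat \<lfloor>\<alpha> * m\<rfloor>))) \<in> O(\<lambda>m. real m * 2 ^ m)"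
proof (rule cover_cost_bigoI)
  have exp_le: "(\<lambda>m. 2 powr (1 * real m)) \<in> O(\<lambda>m. real m * 2 ^ m)" by real_asymp
  show "(\<lambda>m. search_weight t m (nat \<lfloor>\<alpha> * m\<rfloor>)) \<in> O(\<lambda>m. real m * 2 ^ m)"
    using search_weight_bigo_linear_rank[OF assms(2)] exp_le by (rule landau_o.big_trans)
  show "(\<lambda>m. search_weight 1 m (nat \<lfloor>\<alpha> * m\<rfloor>)) \<in> O(\<lambda>m. real m * 2 ^ m)"
    using search_exponent_1_le[OF assms(1), of \<alpha>] assms(2)
    by (intro landau_o.big_trans[OF search_weight_bigo_linear_rank exp_le]) simp
  show "(\<lambda>m. (real m + 1) * 2 ^ m) \<in> O(\<lambda>m. real m * 2 ^ m)" by real_asymp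
qed

lemma cover_cost_bigo_corank: "(\<lambda>m. real (cover_cost t m (m - s))) \<in> O(\<lambda>m. real m * 2 ^ m)"
proof (rule cover_cost_bigoI)
  have exp_le: "(\<lambda>m. (2::real) ^ m) \<in> O(\<lambda>m. real m * 2 ^ m)" by real_asymp
  show "(\<lambda>m. search_weight t m (m - s)) \<in> O(\<lambda>m. real m * 2 ^ m)"
    using search_weight_corank_bigo exp_le by (rule landau_o.big_trans)
  show "(\<lambda>m. search_weight 1 m (m - s)) \<in> O(\<lambda>m. real m * 2 ^ m)"
    using search_weight_corank_bigo exp_le by (rule landau_o.big_trans)
  show "(\<lambda>m. (real m + 1) * 2 ^ m) \<in> O(\<lambda>m. real m * 2 ^ m)" by real_asymp
qed

theorem corollary23:
  fixes t :: nat and \<beta> :: real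
  assumes t: "1 \<le> t"
    and beta: "\<beta> = log 2 (root (t + 1) (2 ^ (t + 1) - 1))"
  shows
    "(\<forall>r::nat. 1 \<le> r \<longrightarrow>
        (\<lambda>m. real (cover_cost t m r)) \<in> O(\<lambda>m. ((2::real) ^ m) ^ (t + 1)))
   \<and> (\<forall>\<alpha>::real. 0 < \<alpha> \<and> \<alpha> < t / ((t + 1) * \<beta>) \<longrightarrow>
        (\<lambda>m. real (cover_cost t m (nat \<lfloor>\<alpha> * m\<rfloor>)))
          \<in> O(\<lambda>m. ((2::real) ^ m) powr ((t + 1) * (1 - \<alpha> * \<beta>))))
   \<and> (\<forall>s::nat.
        (\<lambda>m. real (cover_cost t m (m - s))) \<in> O(\<lambda>m. (2::real) ^ m * log 2 ((2::real) ^ m)))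
   \<and> (\<forall>\<alpha>::real. t / ((t + 1) * \<beta>) \<le> \<alpha> \<and> \<alpha> < 1 \<longrightarrow>
        (\<lambda>m. real (cover_cost t m (nat \<lfloor>\<alpha> * m\<rfloor>)))
          \<in> O(\<lambda>m. (2::real) ^ m * log 2 ((2::real) ^ m)))"
proof -
  note exponent = search_exponent_log_root[OF t beta]
  have n_log_n: "(2::real) ^ m * log 2 (2 ^ m) = real m * 2 ^ m" for m
    by simp
  show ?thesis
  proof (intro conjI allI impI)
    show "(\<lambda>m. real (cover_cost t m r)) \<in> O(\<lambda>m. ((2::real) ^ m) ^ (t + 1))" for r
      using cover_cost_bigo_power[OF t, of "\<lambda>_. r"] .
    show "(\<lambda>m. real (cover_cost t m (nat \<lfloor>\<alpha> * m\<rfloor>)))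
        \<in> O(\<lambda>m. ((2::real) ^ m) powr ((t + 1) * (1 - \<alpha> * \<beta>)))"
      if "0 < \<alpha> \<and> \<alpha> < t / ((t + 1) * \<beta>)" for \<alpha>
      using cover_cost_bigo_linear_rank_small[OF t, of \<alpha>] that unfolding exponent by simp
    show "(\<lambda>m. real (cover_cost t m (m - s))) \<in> O(\<lambda>m. (2::real) ^ m * log 2 ((2::real) ^ m))" for s
      using cover_cost_bigo_corank unfolding n_log_n .
    show "(\<lambda>m. real (cover_cost t m (nat \<lfloor>\<alpha> * m\<rfloor>)))
        \<in> O(\<lambda>m. (2::real) ^ m * log 2 ((2::real) ^ m))"
      if "t / ((t + 1) * \<beta>) \<le> \<alpha> \<and> \<alpha> < 1" for \<alpha>
      using cover_cost_bigo_linear_rank_large[OF t, of \<alpha>] that exponent(2)[of \<alpha>]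
      unfolding n_log_n by simp
  qed
qed

end
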